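(* Under the standing assumptions below, fix $\delta_1,\delta_2,\delta_3>0$. There is a constant $C$ such that for all $n\ge2$, almost surely on the event $A_n\setminus B_n$, $$\mathbb P\big[X_{2n}=0\,\big|\,\mathcal F\vee\mathcal G\big]\le C\sqrt{\frac{\ln n}{n}}.$$
   Context: Standing assumptions: $(\epsilon_y)_{y\in\mathbb Z}$ is a stationary sequence of $\{-1,+1\}$-valued associated random variables with $\mathbb P[\epsilon_0=\pm1]=\tfrac12$ and $\mathbb E[\epsilon_0\epsilon_y]=O(|y|^{-\alpha})$ for some $\alpha>1$. $Y$ is a simple symmetric random walk on $\mathbb Z$ with $Y_0=0$, independent of $\epsilon$. $(\xi_i^{(y)})_{i\ge1,y\in\mathbb Z}$ are i.i.d., independent of $(\epsilon,Y)$, with $\mathbb P[\xi_i^{(y)}=k]=\tfrac23(\tfrac13)^k$, $k\ge0$. $\mathcal F=\sigma(Y_k,k\ge0)$, $\mathcal G=\sigma(\epsilon_y,y\in\mathbb Z)$. Local time: $\eta_n(y)=\sum_{k=0}^n\mathbf 1_{\{Y_k=y\}}$, $\eta_{-1}\equiv0$. $X_0=0$, $X_n=\sum_{y}\epsilon_y\sum_{i=1}^{\eta_{n-1}(y)}\xi_i^{(y)}$ for $n\ge1$. $A_n=\{\max_{0\le k\le2n}|Y_k|<n^{1/2+\delta_1}\}\cap\{\max_{y}\eta_{2n-1}(y)<n^{1/2+\delta_2}\}$ and $B_n=A_n\cap\{|\sum_{y}\epsilon_y\eta_{2n-1}(y)|>n^{1/2+\delta_3}\}$. *)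

theory Defs
  imports "HOL-Probability.Probability"
begin

definition local_time :: "(nat \<Rightarrow> 'a \<Rightarrow> int) \<Rightarrow> nat \<Rightarrow> int \<Rightarrow> 'a \<Rightarrow> nat" where
  "local_time Y n y \<omega> = card {k. k \<le> n \<and> Y k \<omega> = y}"

(* X_0 = 0,  X_m = sum_y eps_y sum_{i=1}^{eta_{m-1}(y)} xi_i^(y);  the sum over y is
   written over the (finite) set of visited sites, outside of which eta_{m-1}(y) = 0 *)
definition rwrs_X :: "(int \<Rightarrow> 'a \<Rightarrow> int) \<Rightarrow> (nat \<Rightarrow> 'a \<Rightarrow> int) \<Rightarrow> (nat \<Rightarrow> int \<Rightarrow> 'a \<Rightarrow> nat)
                      \<Rightarrow> nat \<Rightarrow> 'a \<Rightarrow> int" where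
  "rwrs_X eps Y xi m \<omega> =
     (if m = 0 then 0
      else (\<Sum>y\<in>(\<lambda>k. Y k \<omega>) ` {..m - 1}.
              eps y \<omega> * (\<Sum>i=1..local_time Y (m - 1) y \<omega>. int (xi i y \<omega>))))"

definition event_A :: "(nat \<Rightarrow> 'a \<Rightarrow> int) \<Rightarrow> real \<Rightarrow> real \<Rightarrow> nat \<Rightarrow> 'a set" where
  "event_A Y d1 d2 n =
     {\<omega>. (\<forall>k\<le>2*n. real_of_int \<bar>Y k \<omega>\<bar> < real n powr (1/2 + d1)) \<and>
          (\<forall>y. real (local_time Y (2*n - 1) y \<omega>) < real n powr (1/2 + d2))}"

definition event_B :: "(int \<Rightarrow> 'a \<Rightarrow> int) \<Rightarrow> (nat \<Rightarrow> 'a \<Rightarrow> int) \<Rightarrow> real \<Rightarrow> real \<Rightarrow> real \<Rightarrow> nat \<Rightarrow> 'a set" where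
  "event_B eps Y d1 d2 d3 n =
     event_A Y d1 d2 n \<inter>
     {\<omega>. real_of_int \<bar>\<Sum>y\<in>(\<lambda>k. Y k \<omega>) ` {..2*n - 1}. eps y \<omega> * int (local_time Y (2*n - 1) y \<omega>)\<bar>
            > real n powr (1/2 + d3)}"

definition gen_FG :: "'a measure \<Rightarrow> (int \<Rightarrow> 'a \<Rightarrow> int) \<Rightarrow> (nat \<Rightarrow> 'a \<Rightarrow> int) \<Rightarrow> 'a measure" where
  "gen_FG M eps Y = sigma (space M)
     ({Y k -` A \<inter> space M | k A. True} \<union> {eps y -` A \<inter> space M | y A. True})"

definition gen_events :: "'a measure \<Rightarrow> 'i set \<Rightarrow> ('i \<Rightarrow> 'a \<Rightarrow> 'b) \<Rightarrow> 'a set set" where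
  "gen_events M I X = sigma_sets (space M) {X i -` A \<inter> space M | i A. i \<in> I}"

definition coord_mono_on :: "int set \<Rightarrow> ((int \<Rightarrow> int) \<Rightarrow> real) \<Rightarrow> bool" where
  "coord_mono_on I f \<longleftrightarrow> (\<forall>x z. (\<forall>i\<in>I. x i \<le> z i) \<longrightarrow> f x \<le> f z)"

definition associated :: "'a measure \<Rightarrow> (int \<Rightarrow> 'a \<Rightarrow> int) \<Rightarrow> bool" where
  "associated M eps \<longleftrightarrow>
     (\<forall>I f g. finite I \<longrightarrow> coord_mono_on I f \<longrightarrow> coord_mono_on I g \<longrightarrow>
        (\<integral>\<omega>. f (\<lambda>i. eps i \<omega>) * g (\<lambda>i. eps i \<omega>) \<partial>M)
          \<ge> (\<integral>\<omega>. f (\<lambda>i. eps i \<omega>) \<partial>M) * (\<integral>\<omega>. g (\<lambda>i. eps i \<omega>) \<partial>M))"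

end

theory Submission
  imports Defs
begin

(* Given the walk and the environment, X_m = sum_q sigma_q xi_q is a signed sum of m
   independent Geometric(2/3) variables, one for each slot q = (i, y) with 1 <= i <= eta_{m-1}(y),
   the sign sigma_q = eps_y being frozen.  So X_m = 0 says that two independent sums U, V over
   disjoint groups of slots agree, and if U runs over the larger group (at least m/2 slots),
   P(U = V) <= max_k P(U = k).  U is negative binomial with a >= m/2 trials, and its weights f k are
   at most 16 / sqrt a: the ratio f (k+1) / f k = (k+a) / (3(k+1)) decreases in k, so for
   L = floor (sqrt a / 4) either it stays >= 1 - 1/(2L) on the L indices after k, or it is <= 1
   on the L indices before k; either way L weights are >= f k / 2, and they sum to at most 1. *)

definition negbin :: "nat \<Rightarrow> nat \<Rightarrow> real" where
  "negbin a k = real ((k + a - 1) choose k) * 2 ^ a / 3 ^ (a + k)"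

lemma sum_choose_pred_lower: "(\<Sum>l\<le>k. (l + a - 1) choose l) = (k + a) choose k"
proof (cases a)
  case 0
  have "(\<Sum>l\<le>k. (l - 1) choose l) = (\<Sum>l\<in>{0}. (l - 1) choose l)"
    by (rule sum.mono_neutral_right) (auto simp: binomial_eq_0)
  then show ?thesis by (simp add: 0)
next
  case (Suc r)
  have "(\<Sum>l\<le>k. (l + a - 1) choose l) = (\<Sum>l\<le>k. (r + l) choose l)"
    by (simp add: Suc add.commute)
  also have "\<dots> = Suc (r + k) choose k" by (rule sum_choose_lower)
  finally show ?thesis by (simp add: Suc ac_simps)
qed

lemma negbin_convolution: "(\<Sum>l\<le>k. negbin a l * (2/3 * (1/3) ^ (k - l))) = negbin (Suc a) k"
proof -
  have "negbin a l * (2/3 * (1/3) ^ (k - l)) = real ((l + a - 1) choose l) * (2 ^ Suc a / 3 ^ (Suc a + k))"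
    if "l \<in> {..k}" for l
  proof -
    have "(3::real) ^ (Suc a + k) = 3 ^ (a + l) * 3 * 3 ^ (k - l)"
      using that by (simp flip: power_add power_Suc2 add: algebra_simps)
    then show ?thesis unfolding negbin_def by (simp add: field_simps)
  qed
  then have "(\<Sum>l\<le>k. negbin a l * (2/3 * (1/3) ^ (k - l)))
      = (\<Sum>l\<le>k. real ((l + a - 1) choose l) * (2 ^ Suc a / 3 ^ (Suc a + k)))"
    by (rule sum.cong[OF refl])
  also have "\<dots> = (\<Sum>l\<le>k. real ((l + a - 1) choose l)) * (2 ^ Suc a / 3 ^ (Suc a + k))"
    by (simp only: sum_distrib_right)
  also have "(\<Sum>l\<le>k. real ((l + a - 1) choose l)) = real ((k + a) choose k)"
    by (simp only: of_nat_sum[symmetric] sum_choose_pred_lower)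
  finally show ?thesis by (simp add: negbin_def)
qed

lemma negbin_Suc:
  assumes "a \<ge> 1"
  shows "negbin a (Suc k) = negbin a k * ((real k + a) / (3 * (real k + 1)))"
proof -
  obtain b where b: "a = Suc b" using assms by (cases a) auto
  have "real (Suc (k + b)) * real ((k + b) choose k) = real (Suc (k + b) choose Suc k) * real (Suc k)"
    by (simp only: of_nat_mult[symmetric] Suc_times_binomial_eq)
  then have c: "real (Suc (k + b) choose Suc k) = real ((k + b) choose k) * (real k + a) / (real k + 1)"
    by (simp add: field_simps b)
  have e: "Suc k + a - 1 = Suc (k + b)" "k + a - 1 = k + b" using b by auto
  have "negbin a (Suc k) = real (Suc (k + b) choose Suc k) * 2 ^ a / 3 ^ (a + Suc k)"
    unfolding negbin_def e(1) ..
  also have "\<dots> = real ((k + b) choose k) * (real k + a) / (real k + 1) * 2 ^ a / (3 ^ (a + k) * 3)"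
    by (simp only: c add_Suc_right power_Suc2)
  also have "\<dots> = negbin a k * ((real k + a) / (3 * (real k + 1)))"
    unfolding negbin_def e(2) by (simp add: field_simps)
  finally show ?thesis .
qed

lemma card_mult_le_total_mass:
  fixes f :: "nat \<Rightarrow> real"
  assumes mass: "\<And>W. finite W \<Longrightarrow> sum f W \<le> 1"
    and inj: "inj_on g {..<L}" and lower: "\<And>i. i < L \<Longrightarrow> c \<le> f (g i)"
  shows "real L * c \<le> 1"
proof -
  have "real L * c = (\<Sum>i<L. c)" by simp
  also have "\<dots> \<le> (\<Sum>i<L. f (g i))" by (rule sum_mono) (simp add: lower)
  also have "\<dots> = sum f (g ` {..<L})" by (simp add: sum.reindex[OF inj])
  also have "\<dots> \<le> 1" by (rule mass) simp
  finally show ?thesis .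
qed

lemma forward_window_bound:
  fixes f r :: "nat \<Rightarrow> real"
  assumes nonneg: "\<And>j. 0 \<le> f j" and mass: "\<And>W. finite W \<Longrightarrow> sum f W \<le> 1"
    and step: "\<And>j. f (Suc j) = f j * r j" and antimono: "\<And>i j. i \<le> j \<Longrightarrow> r j \<le> r i"
    and L: "L \<ge> 1" and near_one: "1 - 1 / (2 * real L) \<le> r (k + L)"
  shows "f k \<le> 2 / real L"
proof -
  define q where "q = 1 - 1 / (2 * real L)"
  have q: "0 \<le> q" unfolding q_def using L by (simp add: field_simps)
  have geometric: "f k * q ^ i \<le> f (k + i)" if "i \<le> L" for i
    using that
  proof (induction i)
    case (Suc i)
    have "q \<le> r (k + i)" using antimono[of "k + i" "k + L"] Suc.prems near_one unfolding q_def by simp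
    then have "f k * q ^ i * q \<le> f (k + i) * r (k + i)"
      using Suc nonneg q by (intro mult_mono) auto
    then show ?case using step[of "k + i"] by (simp add: algebra_simps)
  qed simp
  have half: "1/2 \<le> q ^ i" if "i \<le> L" for i
  proof -
    have "1 + real i * (- 1 / (2 * real L)) \<le> (1 + (- 1 / (2 * real L))) ^ i"
      by (rule Bernoulli_inequality) (use L in \<open>simp add: field_simps\<close>)
    moreover have "1/2 \<le> 1 + real i * (- 1 / (2 * real L))" using that L by (simp add: field_simps)
    ultimately show ?thesis unfolding q_def by simp
  qed
  have "real L * (f k / 2) \<le> 1"
  proof (rule card_mult_le_total_mass[OF mass])
    show "inj_on ((+) k) {..<L}" by simp
    fix i assume "i < L"
    then have "f k * (1/2) \<le> f k * q ^ i" using half nonneg by (intro mult_left_mono) auto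
    also have "\<dots> \<le> f (k + i)" using geometric \<open>i < L\<close> by simp
    finally show "f k / 2 \<le> f (k + i)" by simp
  qed
  then show ?thesis using L by (simp add: field_simps)
qed

lemma backward_window_bound:
  fixes f r :: "nat \<Rightarrow> real"
  assumes nonneg: "\<And>j. 0 \<le> f j" and mass: "\<And>W. finite W \<Longrightarrow> sum f W \<le> 1"
    and step: "\<And>j. f (Suc j) = f j * r j"
    and L: "L \<ge> 1" "L \<le> k" and below_one: "\<And>j. k - L \<le> j \<Longrightarrow> r j \<le> 1"
  shows "f k \<le> 1 / real L"
proof -
  have monotone: "f k \<le> f (k - i)" if "i \<le> L" for i
    using that
  proof (induction i)
    case (Suc i)
    have "f (k - i) = f (k - Suc i) * r (k - Suc i)"
      using step[of "k - Suc i"] Suc.prems L by (simp add: Suc_diff_Suc)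
    also have "\<dots> \<le> f (k - Suc i)"
      using below_one[of "k - Suc i"] Suc.prems nonneg by (simp add: mult_left_le)
    finally show ?case using Suc by simp
  qed simp
  have "real L * f k \<le> 1"
  proof (rule card_mult_le_total_mass[OF mass])
    show "inj_on ((-) k) {..<L}" using L by (auto simp: inj_on_def)
    show "f k \<le> f (k - i)" if "i < L" for i using monotone[of i] that by simp
  qed
  then show ?thesis using L by (simp add: field_simps)
qed

lemma ratio_far_from_one:
  fixes a L k :: nat
  assumes L: "L \<ge> 1" and a: "16 * real L ^ 2 \<le> real a"
    and far: "(real (k + L) + a) / (3 * (real (k + L) + 1)) < 1 - 1 / (2 * real L)"
  shows "real a + 2 * real L < 2 * real k + 3"
proof -
  define x where "x = real k + real L + 1"
  have x: "x > 0" unfolding x_def by simp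
  have "(x + a - 1) / (3 * x) < 1 - 1 / (2 * real L)"
    using far unfolding x_def by (simp add: algebra_simps)
  then have h1: "2 * real L * (real a - 1) < 2 * real L * (2 * x) - 3 * x"
    using x L by (simp add: field_simps)
  then have "2 * real L * (real a - 1) < 2 * real L * (2 * x)" using x by linarith
  then have "real a - 1 < 2 * x" using L by simp
  moreover have "1 \<le> real L ^ 2" using L by simp
  ultimately have "3 * x \<ge> 8 * real L ^ 2" using a by linarith
  then have "2 * real L * (real a - 1) < 2 * real L * (2 * x - 4 * real L)"
    using h1 by (simp add: algebra_simps power2_eq_square)
  then have "real a - 1 < 2 * x - 4 * real L" using L by simp
  then show ?thesis unfolding x_def by simp
qed

lemma ratio_sequence_le_window:
  fixes f :: "nat \<Rightarrow> real" and a :: nat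
  assumes nonneg: "\<And>j. 0 \<le> f j" and mass: "\<And>W. finite W \<Longrightarrow> sum f W \<le> 1"
    and step: "\<And>j. f (Suc j) = f j * ((real j + a) / (3 * (real j + 1)))"
    and L: "L \<ge> 1" and La: "16 * real L ^ 2 \<le> real a"
  shows "f k \<le> 2 / real L"
proof -
  have "1 \<le> real L ^ 2" using L by simp
  then have a: "16 \<le> real a" using La by linarith
  define r where "r j = (real j + a) / (3 * (real j + 1))" for j
  have step_r: "f (Suc j) = f j * r j" for j unfolding r_def by (rule step)
  show ?thesis
  proof (cases "1 - 1 / (2 * real L) \<le> r (k + L)")
    case True
    show ?thesis
    proof (rule forward_window_bound[OF nonneg mass step_r _ L True])
      show "r j \<le> r i" if "i \<le> j" for i j
      proof -
        have "0 \<le> (real a - 1) * (real j - real i)" using that a by simp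
        then show ?thesis unfolding r_def by (simp add: divide_simps algebra_simps)
      qed
    qed
  next
    case False
    then have "r (k + L) < 1 - 1 / (2 * real L)" by simp
    then have far: "real a + 2 * real L < 2 * real k + 3"
      unfolding r_def by (rule ratio_far_from_one[OF L La])
    have "f k \<le> 1 / real L"
    proof (rule backward_window_bound[OF nonneg mass step_r L])
      show "L \<le> k" using far a by linarith
      show "r j \<le> 1" if "k - L \<le> j" for j
      proof -
        have "real k \<le> real j + real L" using that by linarith
        then have "real a < 2 * real j + 3" using far by linarith
        then show ?thesis unfolding r_def by simp
      qed
    qed
    also have "\<dots> \<le> 2 / real L" using L by (simp add: divide_right_mono)
    finally show ?thesis .
  qed
qed

lemma ratio_sequence_le_inverse_sqrt:
  fixes f :: "nat \<Rightarrow> real" and a :: nat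
  assumes nonneg: "\<And>j. 0 \<le> f j" and mass: "\<And>W. finite W \<Longrightarrow> sum f W \<le> 1"
    and step: "\<And>j. f (Suc j) = f j * ((real j + a) / (3 * (real j + 1)))" and a: "a \<ge> 1"
  shows "f k \<le> 16 / sqrt a"
proof (cases "a < 64")
  case True
  have "f k \<le> 1" using mass[of "{k}"] by simp
  moreover have "sqrt a < sqrt 64" using True by (subst real_sqrt_less_iff) simp
  ultimately have "f k * sqrt a \<le> 1 * 16" using nonneg[of k] by (intro mult_mono) auto
  then show ?thesis using a by (simp add: field_simps)
next
  case False
  define s where "s = sqrt a"
  have s: "s \<ge> 8" unfolding s_def using False by (intro real_le_rsqrt) simp
  define L where "L = nat \<lfloor>s / 4\<rfloor>"
  have L_upper: "real L \<le> s / 4" and L_lower: "s / 8 \<le> real L" unfolding L_def using s by linarith+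
  have L: "L \<ge> 1" using L_lower s by (simp add: le_divide_eq)
  have "16 * real L ^ 2 \<le> 16 * (s / 4) ^ 2" using L_upper by (simp add: power_mono)
  also have "\<dots> = real a" unfolding s_def by (simp add: power_divide)
  finally have "f k \<le> 2 / real L" using ratio_sequence_le_window[OF nonneg mass step L] by blast
  also have "\<dots> \<le> 16 / s" using L_lower s L by (simp add: field_simps)
  finally show ?thesis unfolding s_def .
qed

context prob_space
begin

lemma borel_measurable_sum_vars:
  fixes X :: "'i \<Rightarrow> 'a \<Rightarrow> nat"
  assumes ind: "indep_vars (\<lambda>_. count_space UNIV) X I" and J: "J \<subseteq> I"
  shows "(\<lambda>\<omega>. real (\<Sum>p\<in>J. X p \<omega>)) \<in> borel_measurable M"
proof -
  have "X p \<in> M \<rightarrow>\<^sub>M count_space UNIV" if "p \<in> J" for p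
    using ind J that unfolding indep_vars_def by auto
  then show ?thesis
    unfolding of_nat_sum by (intro borel_measurable_sum measurable_compose[OF _ measurable_count_space]) auto
qed

lemma sets_sum_vars_eq:
  fixes X :: "'i \<Rightarrow> 'a \<Rightarrow> nat"
  assumes ind: "indep_vars (\<lambda>_. count_space UNIV) X I" and J: "J \<subseteq> I"
  shows "{\<omega>\<in>space M. (\<Sum>p\<in>J. X p \<omega>) = k} \<in> events"
proof -
  have "(\<lambda>\<omega>. real (\<Sum>p\<in>J. X p \<omega>)) -` {real k} \<inter> space M \<in> events"
    by (rule measurable_sets[OF borel_measurable_sum_vars[OF ind J]]) simp
  also have "(\<lambda>\<omega>. real (\<Sum>p\<in>J. X p \<omega>)) -` {real k} \<inter> space M = {\<omega>\<in>space M. (\<Sum>p\<in>J. X p \<omega>) = k}"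
    by (auto simp del: of_nat_sum)
  finally show ?thesis .
qed

lemma indep_var_disjoint_sums:
  fixes X :: "'i \<Rightarrow> 'a \<Rightarrow> nat"
  assumes ind: "indep_vars (\<lambda>_. count_space UNIV) X I"
    and J: "J1 \<inter> J2 = {}" "J1 \<subseteq> I" "J2 \<subseteq> I"
  shows "indep_var borel (\<lambda>\<omega>. real (\<Sum>p\<in>J1. X p \<omega>)) borel (\<lambda>\<omega>. real (\<Sum>p\<in>J2. X p \<omega>))"
proof -
  have sum_measurable: "(\<lambda>f. real (\<Sum>p\<in>J. f p)) \<in> borel_measurable (PiM J (\<lambda>_. count_space UNIV))"
    for J :: "'i set"
    unfolding of_nat_sum
    by (intro borel_measurable_sum measurable_compose[OF measurable_component_singleton]) auto
  have "indep_var borel ((\<lambda>f. real (\<Sum>p\<in>J1. f p)) \<circ> (\<lambda>\<omega>. restrict (\<lambda>i. X i \<omega>) J1))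
      borel ((\<lambda>f. real (\<Sum>p\<in>J2. f p)) \<circ> (\<lambda>\<omega>. restrict (\<lambda>i. X i \<omega>) J2))"
    using J by (intro indep_var_compose[OF indep_var_restrict[OF ind]] sum_measurable) auto
  then show ?thesis by (simp add: comp_def)
qed

lemma prob_indep_var_nat_eq:
  fixes U V :: "'a \<Rightarrow> nat"
  assumes "indep_var borel (\<lambda>\<omega>. real (U \<omega>)) borel (\<lambda>\<omega>. real (V \<omega>))"
  shows "prob {\<omega>\<in>space M. U \<omega> = l \<and> V \<omega> = m} = prob {\<omega>\<in>space M. U \<omega> = l} * prob {\<omega>\<in>space M. V \<omega> = m}"
proof -
  have "prob ((\<lambda>\<omega>. (real (U \<omega>), real (V \<omega>))) -` ({real l} \<times> {real m}) \<inter> space M) =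
    prob ((\<lambda>\<omega>. real (U \<omega>)) -` {real l} \<inter> space M) * prob ((\<lambda>\<omega>. real (V \<omega>)) -` {real m} \<inter> space M)"
    by (rule indep_varD[OF assms]) auto
  moreover have "(\<lambda>\<omega>. (real (U \<omega>), real (V \<omega>))) -` ({real l} \<times> {real m}) \<inter> space M
      = {\<omega>\<in>space M. U \<omega> = l \<and> V \<omega> = m}"
    by auto
  moreover have "(\<lambda>\<omega>. real (W \<omega>)) -` {real l} \<inter> space M = {\<omega>\<in>space M. W \<omega> = l}" for W :: "'a \<Rightarrow> nat" and l
    by auto
  ultimately show ?thesis by simp
qed

lemma prob_sum_geometric_eq_negbin:
  fixes X :: "'i \<Rightarrow> 'a \<Rightarrow> nat"
  assumes ind: "indep_vars (\<lambda>_. count_space UNIV) X I"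
    and geometric: "\<And>p k. p \<in> I \<Longrightarrow> prob {\<omega>\<in>space M. X p \<omega> = k} = 2/3 * (1/3) ^ k"
    and J: "finite J" "J \<subseteq> I"
  shows "prob {\<omega>\<in>space M. (\<Sum>p\<in>J. X p \<omega>) = k} = negbin (card J) k"
  using J
proof (induction J arbitrary: k rule: finite_induct)
  case empty
  then show ?case by (cases "k = 0") (simp_all add: negbin_def binomial_eq_0 prob_space)
next
  case (insert j J)
  let ?U = "\<lambda>\<omega>. \<Sum>p\<in>J. X p \<omega>"
  have j: "j \<in> I" and J: "J \<subseteq> I" using insert by auto
  have "{\<omega>\<in>space M. (\<Sum>p\<in>insert j J. X p \<omega>) = k}
      = (\<Union>l\<in>{..k}. {\<omega>\<in>space M. ?U \<omega> = l \<and> (\<Sum>p\<in>{j}. X p \<omega>) = k - l})"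
    using insert by auto
  also have "prob \<dots> = (\<Sum>l\<le>k. prob {\<omega>\<in>space M. ?U \<omega> = l \<and> (\<Sum>p\<in>{j}. X p \<omega>) = k - l})"
  proof (rule finite_measure_finite_Union)
    have "{\<omega>\<in>space M. ?U \<omega> = l \<and> (\<Sum>p\<in>{j}. X p \<omega>) = k - l}
        = {\<omega>\<in>space M. ?U \<omega> = l} \<inter> {\<omega>\<in>space M. (\<Sum>p\<in>{j}. X p \<omega>) = k - l}" for l
      by auto
    then show "(\<lambda>l. {\<omega>\<in>space M. ?U \<omega> = l \<and> (\<Sum>p\<in>{j}. X p \<omega>) = k - l}) ` {..k} \<subseteq> events"
      using sets_sum_vars_eq[OF ind J] sets_sum_vars_eq[OF ind, of "{j}"] j by auto
  qed (auto simp: disjoint_family_on_def)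
  also have "\<dots> = (\<Sum>l\<le>k. negbin (card J) l * (2/3 * (1/3) ^ (k - l)))"
  proof (rule sum.cong[OF refl])
    fix l
    have "prob {\<omega>\<in>space M. ?U \<omega> = l \<and> (\<Sum>p\<in>{j}. X p \<omega>) = k - l}
        = prob {\<omega>\<in>space M. ?U \<omega> = l} * prob {\<omega>\<in>space M. (\<Sum>p\<in>{j}. X p \<omega>) = k - l}"
      by (rule prob_indep_var_nat_eq[OF indep_var_disjoint_sums[OF ind]]) (use insert j in auto)
    then show "prob {\<omega>\<in>space M. ?U \<omega> = l \<and> (\<Sum>p\<in>{j}. X p \<omega>) = k - l}
        = negbin (card J) l * (2/3 * (1/3) ^ (k - l))"
      using insert.IH[OF J] geometric[OF j] by simp
  qed
  also have "\<dots> = negbin (card (insert j J)) k"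
    using insert.hyps negbin_convolution[of "card J" k] by simp
  finally show ?case .
qed

lemma prob_sum_geometric_le:
  fixes X :: "'i \<Rightarrow> 'a \<Rightarrow> nat"
  assumes ind: "indep_vars (\<lambda>_. count_space UNIV) X I"
    and geometric: "\<And>p k. p \<in> I \<Longrightarrow> prob {\<omega>\<in>space M. X p \<omega> = k} = 2/3 * (1/3) ^ k"
    and J: "finite J" "J \<subseteq> I" "J \<noteq> {}"
  shows "prob {\<omega>\<in>space M. (\<Sum>p\<in>J. X p \<omega>) = k} \<le> 16 / sqrt (card J)"
proof -
  have card: "card J \<ge> 1" using J by (simp add: Suc_le_eq card_gt_0_iff)
  have "negbin (card J) k \<le> 16 / sqrt (card J)"
  proof (rule ratio_sequence_le_inverse_sqrt[OF _ _ negbin_Suc[OF card] card])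
    show "0 \<le> negbin (card J) k" for k unfolding negbin_def by simp
    fix W :: "nat set" assume W: "finite W"
    have "sum (negbin (card J)) W = (\<Sum>k\<in>W. prob {\<omega>\<in>space M. (\<Sum>p\<in>J. X p \<omega>) = k})"
      by (simp add: prob_sum_geometric_eq_negbin[OF ind geometric J(1,2)])
    also have "\<dots> = prob (\<Union>k\<in>W. {\<omega>\<in>space M. (\<Sum>p\<in>J. X p \<omega>) = k})"
      by (rule finite_measure_finite_Union[symmetric])
         (use W sets_sum_vars_eq[OF ind J(2)] in \<open>auto simp: disjoint_family_on_def\<close>)
    finally show "sum (negbin (card J)) W \<le> 1" by simp
  qed
  then show ?thesis by (simp add: prob_sum_geometric_eq_negbin[OF ind geometric J(1,2)])
qed

lemma prob_eq_indep_le: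
  fixes U V :: "'a \<Rightarrow> nat"
  assumes indep: "indep_var borel (\<lambda>\<omega>. real (U \<omega>)) borel (\<lambda>\<omega>. real (V \<omega>))"
    and point: "\<And>k. prob {\<omega>\<in>space M. U \<omega> = k} \<le> c"
  shows "prob {\<omega>\<in>space M. U \<omega> = V \<omega>} \<le> c"
proof -
  have events: "{\<omega>\<in>space M. W \<omega> = k} \<in> events"
    if "(\<lambda>\<omega>. real (W \<omega>)) \<in> borel_measurable M" for W :: "'a \<Rightarrow> nat" and k
    using measurable_sets[OF that, of "{real k}"] by (simp add: vimage_def Int_def conj_commute)
  note U = events[OF indep_var_rv1[OF indep]] and V = events[OF indep_var_rv2[OF indep]]
  have UV_sums: "(\<lambda>k. prob {\<omega>\<in>space M. U \<omega> = k \<and> V \<omega> = k}) sums prob (\<Union>k. {\<omega>\<in>space M. U \<omega> = k \<and> V \<omega> = k})"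
    using U V by (intro finite_measure_UNION) (auto simp: disjoint_family_on_def Int_def)
  have V_sums: "(\<lambda>k. c * prob {\<omega>\<in>space M. V \<omega> = k}) sums (c * prob (\<Union>k. {\<omega>\<in>space M. V \<omega> = k}))"
    using V by (intro sums_mult finite_measure_UNION) (auto simp: disjoint_family_on_def)
  have le: "prob {\<omega>\<in>space M. U \<omega> = k \<and> V \<omega> = k} \<le> c * prob {\<omega>\<in>space M. V \<omega> = k}" for k
    unfolding prob_indep_var_nat_eq[OF indep] by (rule mult_right_mono[OF point measure_nonneg])
  have "prob (\<Union>k. {\<omega>\<in>space M. U \<omega> = k \<and> V \<omega> = k}) \<le> c * prob (\<Union>k. {\<omega>\<in>space M. V \<omega> = k})"
    by (rule sums_le[OF le UV_sums V_sums])
  also have "\<dots> \<le> c"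
    using order_trans[OF measure_nonneg point] by (intro mult_left_le) auto
  also have "(\<Union>k. {\<omega>\<in>space M. U \<omega> = k \<and> V \<omega> = k}) = {\<omega>\<in>space M. U \<omega> = V \<omega>}"
    by auto
  finally show ?thesis .
qed

lemma prob_sums_eq_le:
  fixes X :: "'i \<Rightarrow> 'a \<Rightarrow> nat"
  assumes ind: "indep_vars (\<lambda>_. count_space UNIV) X I"
    and geometric: "\<And>p k. p \<in> I \<Longrightarrow> prob {\<omega>\<in>space M. X p \<omega> = k} = 2/3 * (1/3) ^ k"
    and J: "finite J1" "J1 \<subseteq> I" "J1 \<noteq> {}" "J2 \<subseteq> I" "J1 \<inter> J2 = {}" "card J2 \<le> card J1"
  shows "prob {\<omega>\<in>space M. (\<Sum>p\<in>J1. X p \<omega>) = (\<Sum>p\<in>J2. X p \<omega>)}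
           \<le> 16 * sqrt 2 / sqrt (card J1 + card J2)"
proof -
  have "prob {\<omega>\<in>space M. (\<Sum>p\<in>J1. X p \<omega>) = (\<Sum>p\<in>J2. X p \<omega>)} \<le> 16 / sqrt (card J1)"
    by (rule prob_eq_indep_le[OF indep_var_disjoint_sums[OF ind J(5,2,4)]
          prob_sum_geometric_le[OF ind geometric J(1-3)]])
  also have "\<dots> \<le> 16 * sqrt 2 / sqrt (card J1 + card J2)"
  proof -
    have "sqrt (card J1 + card J2) \<le> sqrt (2 * card J1)" using J(6) by simp
    then have "sqrt (card J1 + card J2) \<le> sqrt 2 * sqrt (card J1)" by (simp add: real_sqrt_mult)
    moreover have "card J1 > 0" using J(1,3) by (simp add: card_gt_0_iff)
    ultimately show ?thesis by (simp add: field_simps)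
  qed
  finally show ?thesis .
qed

lemma prob_signed_sum_zero_le:
  fixes X :: "'i \<Rightarrow> 'a \<Rightarrow> nat" and \<sigma> :: "'i \<Rightarrow> int"
  assumes ind: "indep_vars (\<lambda>_. count_space UNIV) X I"
    and geometric: "\<And>p k. p \<in> I \<Longrightarrow> prob {\<omega>\<in>space M. X p \<omega> = k} = 2/3 * (1/3) ^ k"
    and J: "finite J" "J \<subseteq> I" "J \<noteq> {}" and sign: "\<And>q. q \<in> J \<Longrightarrow> \<sigma> q = 1 \<or> \<sigma> q = -1"
  shows "prob {\<omega>\<in>space M. (\<Sum>q\<in>J. \<sigma> q * int (X q \<omega>)) = 0} \<le> 16 * sqrt 2 / sqrt (card J)"
proof -
  define Jp where "Jp = {q\<in>J. \<sigma> q = 1}"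
  define Jm where "Jm = {q\<in>J. \<sigma> q = -1}"
  have split: "J = Jp \<union> Jm" "Jp \<inter> Jm = {}" using sign unfolding Jp_def Jm_def by auto
  have fin: "finite Jp" "finite Jm" and sub: "Jp \<subseteq> I" "Jm \<subseteq> I" using J split by auto
  have card: "card J = card Jp + card Jm" using card_Un_disjoint[OF fin split(2)] split(1) by simp
  have "(\<Sum>q\<in>J. \<sigma> q * int (X q \<omega>)) = (\<Sum>q\<in>Jp. \<sigma> q * int (X q \<omega>)) + (\<Sum>q\<in>Jm. \<sigma> q * int (X q \<omega>))" for \<omega>
    unfolding split(1) by (rule sum.union_disjoint[OF fin split(2)])
  also have "(\<Sum>q\<in>Jp. \<sigma> q * int (X q \<omega>)) + (\<Sum>q\<in>Jm. \<sigma> q * int (X q \<omega>))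
      = int (\<Sum>q\<in>Jp. X q \<omega>) - int (\<Sum>q\<in>Jm. X q \<omega>)" for \<omega>
    by (simp add: Jp_def Jm_def sum_negf)
  finally have zero_iff: "{\<omega>\<in>space M. (\<Sum>q\<in>J. \<sigma> q * int (X q \<omega>)) = 0}
      = {\<omega>\<in>space M. (\<Sum>q\<in>Jp. X q \<omega>) = (\<Sum>q\<in>Jm. X q \<omega>)}"
    by (auto simp del: of_nat_sum)
  show ?thesis
  proof (cases "card Jm \<le> card Jp")
    case True
    then have "Jp \<noteq> {}" using J fin split by auto
    with True show ?thesis
      unfolding zero_iff card using prob_sums_eq_le[OF ind geometric] fin sub split by simp
  next
    case False
    then have "Jm \<noteq> {}" by auto
    moreover have "{\<omega>\<in>space M. (\<Sum>q\<in>Jp. X q \<omega>) = (\<Sum>q\<in>Jm. X q \<omega>)}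
        = {\<omega>\<in>space M. (\<Sum>q\<in>Jm. X q \<omega>) = (\<Sum>q\<in>Jp. X q \<omega>)}" by auto
    ultimately show ?thesis
      unfolding zero_iff card using False prob_sums_eq_le[OF ind geometric, of Jm Jp] fin sub split
      by (simp add: Int_commute add.commute)
  qed
qed

end

definition visit_slots :: "int list \<Rightarrow> (nat \<times> int) set" where
  "visit_slots p = {(i, y). y \<in> set p \<and> i \<in> {1..count_list p y}}"

lemma visit_slots_eq_image: "visit_slots p = prod.swap ` (SIGMA y:set p. {1..count_list p y})"
  unfolding visit_slots_def by force

lemma finite_visit_slots: "finite (visit_slots p)"
  by (simp add: visit_slots_eq_image)

lemma visit_slots_memD: "q \<in> visit_slots p \<Longrightarrow> 1 \<le> fst q \<and> snd q \<in> set p"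
  by (auto simp: visit_slots_def)

lemma card_visit_slots: "card (visit_slots p) = length p"
proof -
  have "card (visit_slots p) = card (SIGMA y:set p. {1..count_list p y})"
    unfolding visit_slots_eq_image by (rule card_image) simp
  also have "\<dots> = (\<Sum>y\<in>set p. count_list p y)" by simp
  also have "\<dots> = length p" by (rule sum_count_set) auto
  finally show ?thesis .
qed

lemma sum_visit_slots:
  "(\<Sum>q\<in>visit_slots p. g (fst q) (snd q)) = (\<Sum>y\<in>set p. \<Sum>i=1..count_list p y. g i y)"
proof -
  have "(\<Sum>q\<in>visit_slots p. g (fst q) (snd q)) = (\<Sum>(y, i)\<in>(SIGMA y:set p. {1..count_list p y}). g i y)"
    unfolding visit_slots_eq_image by (subst sum.reindex) (auto simp: case_prod_beta)
  also have "\<dots> = (\<Sum>y\<in>set p. \<Sum>i=1..count_list p y. g i y)"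
    by (rule sum.Sigma[symmetric]) auto
  finally show ?thesis .
qed

lemma local_time_eq_count_list: "local_time Y n y \<omega> = count_list (map (\<lambda>k. Y k \<omega>) [0..<Suc n]) y"
  unfolding local_time_def count_list_eq_length_filter length_filter_conv_card
  by (auto simp del: upt_Suc intro!: arg_cong[where f = card])

lemma map_of_map_graph:
  "map_of (map (\<lambda>x. (f x, g (f x))) xs) y = (if y \<in> f ` set xs then Some (g y) else None)"
  by (induction xs) auto

definition signed_path :: "(int \<Rightarrow> 'a \<Rightarrow> int) \<Rightarrow> (nat \<Rightarrow> 'a \<Rightarrow> int) \<Rightarrow> nat \<Rightarrow> 'a \<Rightarrow> (int \<times> int) list" where
  "signed_path eps Y m \<omega> = map (\<lambda>k. (Y k \<omega>, eps (Y k \<omega>) \<omega>)) [0..<m]"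

(* X_m with the walk and the environment frozen to ps, the list of visited sites paired with
   their signs *)
definition slot_sum :: "(nat \<Rightarrow> int \<Rightarrow> 'a \<Rightarrow> nat) \<Rightarrow> (int \<times> int) list \<Rightarrow> 'a \<Rightarrow> int" where
  "slot_sum xi ps \<omega> =
     (\<Sum>q\<in>visit_slots (map fst ps). the (map_of ps (snd q)) * int (xi (fst q) (snd q) \<omega>))"

lemma length_signed_path [simp]: "length (signed_path eps Y m \<omega>) = m"
  by (simp add: signed_path_def)

lemma map_of_signed_path:
  assumes "y \<in> set (map fst (signed_path eps Y m \<omega>))"
  shows "the (map_of (signed_path eps Y m \<omega>) y) = eps y \<omega>"
  using assms map_of_map_graph[of "\<lambda>k. Y k \<omega>" "\<lambda>y. eps y \<omega>" "[0..<m]" y]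
  unfolding signed_path_def by auto

lemma rwrs_X_eq_slot_sum:
  assumes "m \<ge> 1"
  shows "rwrs_X eps Y xi m \<omega> = slot_sum xi (signed_path eps Y m \<omega>) \<omega>"
proof -
  define p where "p = map (\<lambda>k. Y k \<omega>) [0..<m]"
  have path: "map fst (signed_path eps Y m \<omega>) = p" unfolding signed_path_def p_def by simp
  have visited: "set p = (\<lambda>k. Y k \<omega>) ` {..m - 1}" unfolding p_def using assms by auto
  have local_time: "local_time Y (m - 1) y \<omega> = count_list p y" for y
    unfolding local_time_eq_count_list p_def using assms by simp
  have "slot_sum xi (signed_path eps Y m \<omega>) \<omega>
      = (\<Sum>y\<in>set p. \<Sum>i=1..count_list p y. the (map_of (signed_path eps Y m \<omega>) y) * int (xi i y \<omega>))"
    unfolding slot_sum_def path by (rule sum_visit_slots)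
  also have "\<dots> = (\<Sum>y\<in>set p. eps y \<omega> * (\<Sum>i=1..count_list p y. int (xi i y \<omega>)))"
  proof (rule sum.cong[OF refl])
    fix y assume "y \<in> set p"
    then have "the (map_of (signed_path eps Y m \<omega>) y) = eps y \<omega>"
      by (intro map_of_signed_path) (simp only: path)
    then show "(\<Sum>i=1..count_list p y. the (map_of (signed_path eps Y m \<omega>) y) * int (xi i y \<omega>))
        = eps y \<omega> * (\<Sum>i=1..count_list p y. int (xi i y \<omega>))"
      by (simp add: sum_distrib_left)
  qed
  also have "\<dots> = rwrs_X eps Y xi m \<omega>"
    unfolding rwrs_X_def visited local_time using assms by simp
  finally show ?thesis ..
qed

lemma measurable_count_space_sigmaI:
  assumes "G \<subseteq> Pow \<Omega>" and "\<And>A. f -` A \<inter> \<Omega> \<in> sigma_sets \<Omega> G"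
  shows "f \<in> sigma \<Omega> G \<rightarrow>\<^sub>M count_space UNIV"
  using assms by (intro measurableI) (auto simp: sets_measure_of space_measure_of)

lemma signed_path_event:
  "{\<omega>\<in>space M. signed_path eps Y m \<omega> = ps}
     \<in> sigma_sets (space M) (gen_events M UNIV eps \<union> gen_events M UNIV Y)"
proof -
  define G where "G = gen_events M UNIV eps \<union> gen_events M UNIV Y"
  define N where "N = sigma (space M) G"
  have G: "G \<subseteq> Pow (space M)"
    unfolding G_def gen_events_def by (auto dest: sigma_sets_into_sp[rotated])
  have space_N: "space N = space M" and sets_N: "sets N = sigma_sets (space M) G"
    unfolding N_def using G by (simp_all add: space_measure_of sets_measure_of)
  have "Y k -` A \<inter> space M \<in> gen_events M UNIV Y" "eps y -` A \<inter> space M \<in> gen_events M UNIV eps"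
    for k y A
    unfolding gen_events_def by (rule sigma_sets.Basic, blast)+
  then have [measurable]: "Y k \<in> N \<rightarrow>\<^sub>M count_space UNIV" "eps y \<in> N \<rightarrow>\<^sub>M count_space UNIV" for k y
    unfolding N_def using G by (auto intro!: measurable_count_space_sigmaI sigma_sets.Basic simp: G_def)
  have "{\<omega>\<in>space N. \<forall>k<m. Y k \<omega> = fst (ps ! k) \<and> eps (fst (ps ! k)) \<omega> = snd (ps ! k)} \<in> sets N"
    by measurable
  moreover have "{\<omega>\<in>space M. signed_path eps Y m \<omega> = ps}
      = (if length ps = m
         then {\<omega>\<in>space N. \<forall>k<m. Y k \<omega> = fst (ps ! k) \<and> eps (fst (ps ! k)) \<omega> = snd (ps ! k)}
         else {})"
    by (auto simp: space_N signed_path_def list_eq_iff_nth_eq prod_eq_iff)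
  ultimately show ?thesis unfolding sets_N G_def by (auto intro: sigma_sets.Empty)
qed

lemma slot_sum_zero_event:
  "{\<omega>\<in>space M. slot_sum xi ps \<omega> = 0} \<in> gen_events M {p. fst p \<ge> 1} (\<lambda>p. xi (fst p) (snd p))"
proof -
  define G where "G = {(\<lambda>p. xi (fst p) (snd p)) i -` A \<inter> space M | i A. i \<in> {p. fst p \<ge> 1}}"
  define N where "N = sigma (space M) G"
  have G: "G \<subseteq> Pow (space M)" unfolding G_def by auto
  have space_N: "space N = space M" and sets_N: "sets N = gen_events M {p. fst p \<ge> 1} (\<lambda>p. xi (fst p) (snd p))"
    unfolding N_def gen_events_def G_def[symmetric] using G by (simp_all add: space_measure_of sets_measure_of)
  have xi_measurable: "xi i y \<in> N \<rightarrow>\<^sub>M count_space UNIV" if "i \<ge> 1" for i y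
    unfolding N_def using G that
    by (intro measurable_count_space_sigmaI sigma_sets.Basic) (auto simp: G_def intro!: exI[of _ "(i, y)"])
  have "(\<lambda>\<omega>. real (xi i y \<omega>)) \<in> borel_measurable N" if "i \<ge> 1" for i y
    using xi_measurable[OF that] by (rule measurable_compose) simp
  then have "(\<lambda>\<omega>. real_of_int (slot_sum xi ps \<omega>)) \<in> borel_measurable N"
    unfolding slot_sum_def of_int_sum of_int_mult of_int_of_nat_eq
    by (intro borel_measurable_sum borel_measurable_times borel_measurable_const)
       (auto simp: visit_slots_def)
  from measurable_sets[OF this, of "{0}"] show ?thesis
    by (simp add: space_N sets_N vimage_def Int_def conj_commute)
qed

lemma rwrs_X_zero_eq_UN:
  assumes "m \<ge> 1"
  shows "{\<omega>\<in>space M. rwrs_X eps Y xi m \<omega> = 0}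
    = (\<Union>ps. {\<omega>\<in>space M. signed_path eps Y m \<omega> = ps} \<inter> {\<omega>\<in>space M. slot_sum xi ps \<omega> = 0})"
  using rwrs_X_eq_slot_sum[OF assms, of eps Y xi] by auto

context prob_space
begin

lemma prob_Int_UN_indep_le:
  fixes E Z :: "'j::countable \<Rightarrow> 'a set"
  assumes indep: "indep_set S G" and G: "sigma_algebra (space M) G"
    and E: "\<And>j. E j \<in> G" "disjoint_family E" and Z: "\<And>j. Z j \<in> S"
    and bound: "\<And>j. E j \<noteq> {} \<Longrightarrow> prob (Z j) \<le> c" and c: "0 \<le> c" and A: "A \<in> G"
  shows "prob (A \<inter> (\<Union>j. E j \<inter> Z j)) \<le> c * prob A"
proof -
  interpret G: sigma_algebra "space M" G by (rule G)
  have G_events: "G \<subseteq> events" and Z_events: "\<And>j. Z j \<in> events"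
    using indep_setD_ev1[OF indep] indep_setD_ev2[OF indep] Z by auto
  have AE: "A \<inter> E j \<in> G" for j using A E(1) by blast
  have piece: "emeasure M (A \<inter> E j \<inter> Z j) \<le> ennreal c * emeasure M (A \<inter> E j)" for j
  proof (cases "E j = {}")
    case False
    have "prob (A \<inter> E j \<inter> Z j) = prob (Z j) * prob (A \<inter> E j)"
      using indep_setD[OF indep Z AE] by (simp add: Int_ac)
    also have "\<dots> \<le> c * prob (A \<inter> E j)" by (rule mult_right_mono[OF bound[OF False] measure_nonneg])
    finally show ?thesis
      unfolding emeasure_eq_measure ennreal_mult[OF c measure_nonneg, symmetric] by (rule ennreal_leI)
  qed simp
  have disjoint: "disjoint_family (\<lambda>j. A \<inter> E j)" "disjoint_family (\<lambda>j. A \<inter> E j \<inter> Z j)"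
    using E(2) unfolding disjoint_family_on_def by blast+
  have "A \<inter> (\<Union>j. E j \<inter> Z j) = (\<Union>j. A \<inter> E j \<inter> Z j)" by blast
  then have "emeasure M (A \<inter> (\<Union>j. E j \<inter> Z j)) = (\<integral>\<^sup>+j. emeasure M (A \<inter> E j \<inter> Z j) \<partial>count_space UNIV)"
    using AE G_events Z_events by (simp only:) (rule emeasure_UN_countable[OF _ countableI_type disjoint(2)], blast)
  also have "\<dots> \<le> (\<integral>\<^sup>+j. ennreal c * emeasure M (A \<inter> E j) \<partial>count_space UNIV)"
    by (rule nn_integral_mono[OF piece])
  also have "\<dots> = ennreal c * (\<integral>\<^sup>+j. emeasure M (A \<inter> E j) \<partial>count_space UNIV)"
    by (rule nn_integral_cmult) simp
  also have "\<dots> = ennreal c * emeasure M (\<Union>j. A \<inter> E j)"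
    using AE G_events by (subst emeasure_UN_countable[OF _ countableI_type disjoint(1)]) blast+
  also have "\<dots> \<le> ennreal c * emeasure M A"
    using A G_events by (intro mult_left_mono emeasure_mono) auto
  finally have "ennreal (prob (A \<inter> (\<Union>j. E j \<inter> Z j))) \<le> ennreal (c * prob A)"
    by (simp only: emeasure_eq_measure ennreal_mult[OF c measure_nonneg])
  then show ?thesis using c by simp
qed

lemma prob_rwrs_X_zero_Int_le:
  fixes eps :: "int \<Rightarrow> 'a \<Rightarrow> int" and Y :: "nat \<Rightarrow> 'a \<Rightarrow> int" and xi :: "nat \<Rightarrow> int \<Rightarrow> 'a \<Rightarrow> nat"
  assumes eps_pm: "\<And>y \<omega>. \<omega> \<in> space M \<Longrightarrow> eps y \<omega> \<in> {-1, 1}"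
    and xi_indep: "indep_vars (\<lambda>_. count_space UNIV) (\<lambda>p. xi (fst p) (snd p)) {p. fst p \<ge> 1}"
    and xi_dist: "\<And>i y k. i \<ge> 1 \<Longrightarrow> prob {\<omega>\<in>space M. xi i y \<omega> = k} = 2/3 * (1/3) ^ k"
    and xi_indep_env: "indep_set (gen_events M {p. fst p \<ge> 1} (\<lambda>p. xi (fst p) (snd p)))
                         (sigma_sets (space M) (gen_events M UNIV eps \<union> gen_events M UNIV Y))"
    and m: "m \<ge> 1"
    and A: "A \<in> sigma_sets (space M) (gen_events M UNIV eps \<union> gen_events M UNIV Y)"
  shows "prob (A \<inter> {\<omega>\<in>space M. rwrs_X eps Y xi m \<omega> = 0}) \<le> 16 * sqrt 2 / sqrt m * prob A"
  unfolding rwrs_X_zero_eq_UN[OF m]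
proof (rule prob_Int_UN_indep_le[OF xi_indep_env _ signed_path_event _ slot_sum_zero_event _ _ A])
  have "gen_events M UNIV eps \<union> gen_events M UNIV Y \<subseteq> Pow (space M)"
    unfolding gen_events_def by (auto dest: sigma_sets_into_sp[rotated])
  then show "sigma_algebra (space M) (sigma_sets (space M) (gen_events M UNIV eps \<union> gen_events M UNIV Y))"
    by (rule sigma_algebra_sigma_sets)
  show "disjoint_family (\<lambda>ps. {\<omega>\<in>space M. signed_path eps Y m \<omega> = ps})"
    unfolding disjoint_family_on_def by auto
  fix ps
  assume "{\<omega>\<in>space M. signed_path eps Y m \<omega> = ps} \<noteq> {}"
  then obtain \<omega> where \<omega>: "\<omega> \<in> space M" "ps = signed_path eps Y m \<omega>" by auto
  define J where "J = visit_slots (map fst ps)"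
  have card_J: "card J = m" unfolding J_def by (simp add: card_visit_slots \<omega>(2))
  have J: "finite J" "J \<subseteq> {p. fst p \<ge> 1}" "J \<noteq> {}"
    using card_J m visit_slots_memD unfolding J_def by (auto simp: finite_visit_slots)
  have sign: "the (map_of ps (snd q)) = 1 \<or> the (map_of ps (snd q)) = -1" if "q \<in> J" for q
  proof -
    have "snd q \<in> set (map fst (signed_path eps Y m \<omega>))"
      using visit_slots_memD[OF that[unfolded J_def \<omega>(2)]] by blast
    then show ?thesis using eps_pm[OF \<omega>(1), of "snd q"] by (auto simp: \<omega>(2) map_of_signed_path)
  qed
  have "prob {\<omega>\<in>space M. (\<Sum>q\<in>J. the (map_of ps (snd q)) * int (xi (fst q) (snd q) \<omega>)) = 0}
      \<le> 16 * sqrt 2 / sqrt (card J)"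
    using xi_dist by (intro prob_signed_sum_zero_le[OF xi_indep _ J sign]) auto
  then show "prob {\<omega>\<in>space M. slot_sum xi ps \<omega> = 0} \<le> 16 * sqrt 2 / sqrt m"
    unfolding slot_sum_def J_def[symmetric] card_J .
qed simp

lemma real_cond_exp_le_const:
  fixes f :: "'a \<Rightarrow> real"
  assumes sub: "subalgebra M F" and f: "integrable M f"
    and bound: "\<And>A. A \<in> sets F \<Longrightarrow> (\<integral>x. indicator A x * f x \<partial>M) \<le> c * prob A"
  shows "AE x in M. real_cond_exp M F f x \<le> c"
proof -
  interpret finite_measure_subalgebra M F by unfold_locales (rule sub)
  define g where "g = real_cond_exp M F f"
  define D where "D = {x\<in>space M. c < g x}"
  have g_F[measurable]: "g \<in> borel_measurable F" unfolding g_def by simp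
  have space_F: "space F = space M" using sub by (simp add: subalgebra_def)
  have "{x\<in>space F. c < g x} \<in> sets F" by measurable
  then have D_F: "D \<in> sets F" by (simp add: D_def space_F)
  then have D_M: "D \<in> sets M" using sub by (auto simp: subalgebra_def)
  have g: "integrable M g" unfolding g_def using f by (rule real_cond_exp_int(1))
  have "(\<integral>x. indicator D x * g x \<partial>M) = (\<integral>x. indicator D x * f x \<partial>M)"
    unfolding g_def
    by (rule real_cond_exp_intg(2)[OF _ borel_measurable_indicator[OF D_F] borel_measurable_integrable[OF f]])
       (use integrable_mult_indicator[OF D_M f] in simp)
  also have "\<dots> \<le> c * prob D" by (rule bound[OF D_F])
  finally have below: "(\<integral>x. indicator D x * g x \<partial>M) \<le> c * prob D" .
  define h where "h x = indicator D x * (g x - c)" for x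
  have "integrable M (\<lambda>x. indicator D x * g x)" "integrable M (\<lambda>x. indicator D x * c)"
    using integrable_mult_indicator[OF D_M g] integrable_mult_indicator[OF D_M integrable_const[of c]]
    by simp_all
  then have h: "integrable M h" and "(\<integral>x. h x \<partial>M) = (\<integral>x. indicator D x * g x \<partial>M) - c * prob D"
    unfolding h_def right_diff_distrib using D_M by (simp_all add: Bochner_Integration.integral_diff mult.commute)
  then have "(\<integral>x. h x \<partial>M) \<le> 0" using below by simp
  moreover have h_nonneg: "0 \<le> h x" for x unfolding h_def D_def by (simp add: indicator_def)
  ultimately have "(\<integral>x. h x \<partial>M) = 0" using integral_nonneg_AE[of h M] by (simp add: antisym)
  then have "AE x in M. h x = 0" using integral_nonneg_eq_0_iff_AE[OF h] h_nonneg by simp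
  then show ?thesis
    by (rule AE_mp[OF _ AE_I2]) (auto simp: h_def D_def g_def indicator_def)
qed

lemma cond_prob_rwrs_X_zero_le:
  fixes eps :: "int \<Rightarrow> 'a \<Rightarrow> int" and Y :: "nat \<Rightarrow> 'a \<Rightarrow> int" and xi :: "nat \<Rightarrow> int \<Rightarrow> 'a \<Rightarrow> nat"
  assumes eps_pm: "\<And>y \<omega>. \<omega> \<in> space M \<Longrightarrow> eps y \<omega> \<in> {-1, 1}"
    and xi_indep: "indep_vars (\<lambda>_. count_space UNIV) (\<lambda>p. xi (fst p) (snd p)) {p. fst p \<ge> 1}"
    and xi_dist: "\<And>i y k. i \<ge> 1 \<Longrightarrow> prob {\<omega>\<in>space M. xi i y \<omega> = k} = 2/3 * (1/3) ^ k"
    and xi_indep_env: "indep_set (gen_events M {p. fst p \<ge> 1} (\<lambda>p. xi (fst p) (snd p)))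
                         (sigma_sets (space M) (gen_events M UNIV eps \<union> gen_events M UNIV Y))"
    and m: "m \<ge> 1"
  shows "AE \<omega> in M. real_cond_exp M (gen_FG M eps Y)
           (indicator {\<omega>\<in>space M. rwrs_X eps Y xi m \<omega> = 0}) \<omega> \<le> 16 * sqrt 2 / sqrt m"
proof (rule real_cond_exp_le_const)
  let ?G = "sigma_sets (space M) (gen_events M UNIV eps \<union> gen_events M UNIV Y)"
  let ?Z = "{\<omega>\<in>space M. rwrs_X eps Y xi m \<omega> = 0}"
  have G_events: "?G \<subseteq> events" by (rule indep_setD_ev2[OF xi_indep_env])
  have "{\<omega>\<in>space M. signed_path eps Y m \<omega> = ps} \<in> events" for ps
    using signed_path_event[of M eps Y m ps] G_events by blast
  moreover have "{\<omega>\<in>space M. slot_sum xi ps \<omega> = 0} \<in> events" for ps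
    using slot_sum_zero_event[of M xi ps] indep_setD_ev1[OF xi_indep_env] by blast
  ultimately have "?Z \<in> events"
    unfolding rwrs_X_zero_eq_UN[OF m] by (intro sets.countable_UN'' sets.Int) auto
  then show "integrable M (indicator ?Z :: 'a \<Rightarrow> real)"
    by (intro integrable_real_indicator) (simp_all add: emeasure_eq_measure)
  have FG: "sets (gen_FG M eps Y) \<subseteq> ?G"
    unfolding gen_FG_def
    by (subst sets_measure_of)
       (auto simp: gen_events_def intro!: sigma_sets_mono' intro: sigma_sets.Basic)
  then show "subalgebra M (gen_FG M eps Y)"
    using G_events by (auto simp: subalgebra_def gen_FG_def space_measure_of_conv)
  fix A assume "A \<in> sets (gen_FG M eps Y)"
  then have A: "A \<in> ?G" using FG by blast
  have "(\<integral>x. indicator A x * indicator ?Z x \<partial>M) = prob (A \<inter> ?Z)"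
    by (simp add: indicator_inter_arith[symmetric] Int_assoc Int_absorb2)
  also have "\<dots> \<le> 16 * sqrt 2 / sqrt m * prob A"
    by (rule prob_rwrs_X_zero_Int_le[OF eps_pm xi_indep xi_dist xi_indep_env m A])
  finally show "(\<integral>x. indicator A x * indicator ?Z x \<partial>M) \<le> 16 * sqrt 2 / sqrt m * prob A" .
qed

end

lemma inverse_sqrt_le_sqrt_ln_div:
  assumes "n \<ge> 2"
  shows "1 / sqrt (real n) \<le> 1 / sqrt (ln 2) * sqrt (ln (real n) / real n)"
proof -
  have "1 / sqrt (real n) = 1 / sqrt (ln 2) * (sqrt (ln 2) / sqrt (real n))" by simp
  also have "\<dots> \<le> 1 / sqrt (ln 2) * (sqrt (ln (real n)) / sqrt (real n))"
    using assms by (intro mult_left_mono divide_right_mono) auto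
  also have "\<dots> = 1 / sqrt (ln 2) * sqrt (ln (real n) / real n)" by (simp add: real_sqrt_divide)
  finally show ?thesis .
qed

theorem lemma5:
  fixes M :: "'a measure"
    and eps :: "int \<Rightarrow> 'a \<Rightarrow> int"
    and Y :: "nat \<Rightarrow> 'a \<Rightarrow> int"
    and xi :: "nat \<Rightarrow> int \<Rightarrow> 'a \<Rightarrow> nat"
    and \<delta>1 \<delta>2 \<delta>3 :: real
  assumes P: "prob_space M"
    (* environment eps *)
    and eps_rv: "\<And>y. eps y \<in> M \<rightarrow>\<^sub>M count_space UNIV"
    and eps_pm: "\<And>y \<omega>. \<omega> \<in> space M \<Longrightarrow> eps y \<omega> \<in> {-1, 1}"
    and eps_half: "measure M {\<omega>\<in>space M. eps 0 \<omega> = 1} = 1/2"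
    and eps_stat: "\<And>s. distr M (PiM UNIV (\<lambda>_. count_space UNIV)) (\<lambda>\<omega>. \<lambda>y. eps (y + s) \<omega>)
                       = distr M (PiM UNIV (\<lambda>_. count_space UNIV)) (\<lambda>\<omega>. \<lambda>y. eps y \<omega>)"
    and eps_assoc: "associated M eps"
    and eps_corr: "\<exists>\<alpha>>1. \<exists>K. \<forall>y. y \<noteq> 0 \<longrightarrow>
                     \<bar>\<integral>\<omega>. real_of_int (eps 0 \<omega> * eps y \<omega>) \<partial>M\<bar> \<le> K * real_of_int \<bar>y\<bar> powr (-\<alpha>)"
    (* simple symmetric random walk Y *)
    and Y_rv: "\<And>k. Y k \<in> M \<rightarrow>\<^sub>M count_space UNIV"
    and Y0: "\<And>\<omega>. \<omega> \<in> space M \<Longrightarrow> Y 0 \<omega> = 0"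
    and Y_steps_indep: "prob_space.indep_vars M (\<lambda>_. count_space UNIV)
                          (\<lambda>k \<omega>. Y (Suc k) \<omega> - Y k \<omega>) UNIV"
    and Y_steps_dist: "\<And>k. measure M {\<omega>\<in>space M. Y (Suc k) \<omega> - Y k \<omega> = 1} = 1/2 \<and>
                            measure M {\<omega>\<in>space M. Y (Suc k) \<omega> - Y k \<omega> = -1} = 1/2"
    (* Y independent of eps *)
    and Y_eps_indep: "prob_space.indep_set M (gen_events M UNIV eps) (gen_events M UNIV Y)"
    and xi_indep: "prob_space.indep_vars M (\<lambda>_. count_space UNIV)
                     (\<lambda>p. xi (fst p) (snd p)) {p. fst p \<ge> 1}"
    and xi_dist: "\<And>i y k. i \<ge> 1 \<Longrightarrow>
                     measure M {\<omega>\<in>space M. xi i y \<omega> = k} = 2/3 * (1/3) ^ k"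
    and xi_indep_env: "prob_space.indep_set M
                     (gen_events M {p. fst p \<ge> 1} (\<lambda>p. xi (fst p) (snd p)))
                     (sigma_sets (space M) (gen_events M UNIV eps \<union> gen_events M UNIV Y))"
    and d1: "\<delta>1 > 0" and d2: "\<delta>2 > 0" and d3: "\<delta>3 > 0"
  shows "\<exists>C. \<forall>n\<ge>2. AE \<omega> in M.
           \<omega> \<in> event_A Y \<delta>1 \<delta>2 n - event_B eps Y \<delta>1 \<delta>2 \<delta>3 n \<longrightarrow>
           real_cond_exp M (gen_FG M eps Y)
              (indicator {\<omega>\<in>space M. rwrs_X eps Y xi (2*n) \<omega> = 0}) \<omega>
             \<le> C * sqrt (ln (real n) / real n)"
proof (intro exI allI impI)
  interpret prob_space M by (rule P)
  fix n :: nat assume n: "n \<ge> 2"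
  have "16 * sqrt 2 / sqrt (real (2 * n)) = 16 * (1 / sqrt (real n))"
    by (simp add: real_sqrt_mult)
  also have "\<dots> \<le> 16 / sqrt (ln 2) * sqrt (ln (real n) / real n)"
    using inverse_sqrt_le_sqrt_ln_div[OF n] by simp
  finally have bound: "16 * sqrt 2 / sqrt (real (2 * n)) \<le> 16 / sqrt (ln 2) * sqrt (ln (real n) / real n)" .
  have "AE \<omega> in M. real_cond_exp M (gen_FG M eps Y)
          (indicator {\<omega>\<in>space M. rwrs_X eps Y xi (2 * n) \<omega> = 0}) \<omega> \<le> 16 * sqrt 2 / sqrt (real (2 * n))"
    using n by (intro cond_prob_rwrs_X_zero_le[OF eps_pm xi_indep xi_dist xi_indep_env]) auto
  then show "AE \<omega> in M. \<omega> \<in> event_A Y \<delta>1 \<delta>2 n - event_B eps Y \<delta>1 \<delta>2 \<delta>3 n \<longrightarrow>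
      real_cond_exp M (gen_FG M eps Y) (indicator {\<omega>\<in>space M. rwrs_X eps Y xi (2 * n) \<omega> = 0}) \<omega>
        \<le> 16 / sqrt (ln 2) * sqrt (ln (real n) / real n)"
    by eventually_elim (use bound in auto)
qed

end
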